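(* There is a constant $C$ such that the following holds. Let $k_1,k_2,k_3\in\mathbb{Z}$, $j_1,j_2,j_3\in\mathbb{Z}_+$, and let $f_{k_i,j_i}\in L^2(\mathbb{R}\times\mathbb{R})$ be supported in $I_{k_i}\times\widetilde I_{j_i}$, $i=1,2,3$. Then: (a) $|J(f_{k_1,j_1},f_{k_2,j_2},f_{k_3,j_3})|\leq C2^{\min(k_1,k_2,k_3)/2}2^{\min(j_1,j_2,j_3)/2}\prod_{i=1}^3\|f_{k_i,j_i}\|_{L^2}$. (b) If $\max(k_1,k_2,k_3)\geq\min(k_1,k_2,k_3)+5$ and $i\in\{1,2,3\}$, then $|J(f_{k_1,j_1},f_{k_2,j_2},f_{k_3,j_3})|\leq C2^{(j_1+j_2+j_3)/2}2^{-(j_i+k_i)/2}\prod_{l=1}^3\|f_{k_l,j_l}\|_{L^2}$. (c) $|J(f_{k_1,j_1},f_{k_2,j_2},f_{k_3,j_3})|\leq C2^{\min(j_1,j_2,j_3)/2+\mathrm{med}(j_1,j_2,j_3)/4}\prod_{i=1}^3\|f_{k_i,j_i}\|_{L^2}$.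
   Context: $\omega(\xi)=-\xi|\xi|$ and $\Omega(\xi_1,\xi_2)=-\omega(\xi_1+\xi_2)+\omega(\xi_1)+\omega(\xi_2)$. For compactly supported $f,g,h\in L^2(\mathbb{R}^2)$, $J(f,g,h)=\int_{\mathbb{R}^4}f(\xi_1,\mu_1)g(\xi_2,\mu_2)h(\xi_1+\xi_2,\mu_1+\mu_2+\Omega(\xi_1,\xi_2))\,d\xi_1d\xi_2d\mu_1d\mu_2$. For $l\in\mathbb{Z}$, $I_l=\{\xi:|\xi|\in[2^{l-1},2^{l+1}]\}$; for $l\in\mathbb{Z}_+$, $\widetilde I_0=[-2,2]$ and $\widetilde I_l=I_l$ for $l\ge1$. $\mathrm{med}(\alpha_1,\alpha_2,\alpha_3)=\alpha_1+\alpha_2+\alpha_3-\max-\min$. *)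

theory Defs
  imports "HOL-Analysis.Analysis"
begin

definition omega :: "real \<Rightarrow> real" where
  "omega \<xi> = - \<xi> * \<bar>\<xi>\<bar>"

definition Omega :: "real \<Rightarrow> real \<Rightarrow> real" where
  "Omega \<xi>1 \<xi>2 = - omega (\<xi>1 + \<xi>2) + omega \<xi>1 + omega \<xi>2"

definition Idy :: "int \<Rightarrow> real set" where
  "Idy l = {\<xi>. \<bar>\<xi>\<bar> \<in> {2 powr (real_of_int l - 1) .. 2 powr (real_of_int l + 1)}}"

definition Itil :: "nat \<Rightarrow> real set" where
  "Itil l = (if l = 0 then {-2..2} else Idy (int l))"

definition med :: "real \<Rightarrow> real \<Rightarrow> real \<Rightarrow> real" where
  "med a b c = a + b + c - max a (max b c) - min a (min b c)"

definition L2 :: "(real \<times> real \<Rightarrow> complex) \<Rightarrow> bool" where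
  "L2 f \<longleftrightarrow> f \<in> borel_measurable lborel \<and> integrable lborel (\<lambda>x. (norm (f x))\<^sup>2)"

definition L2norm :: "(real \<times> real \<Rightarrow> complex) \<Rightarrow> real" where
  "L2norm f = sqrt (\<integral>x. (norm (f x))\<^sup>2 \<partial>lborel)"

definition J :: "(real \<times> real \<Rightarrow> complex) \<Rightarrow> (real \<times> real \<Rightarrow> complex) \<Rightarrow> (real \<times> real \<Rightarrow> complex) \<Rightarrow> complex" where
  "J f g h = (\<integral>x. (case x of ((\<xi>1, \<mu>1), (\<xi>2, \<mu>2)) \<Rightarrow>
      f (\<xi>1, \<mu>1) * g (\<xi>2, \<mu>2) * h (\<xi>1 + \<xi>2, \<mu>1 + \<mu>2 + Omega \<xi>1 \<xi>2)) \<partial>(lborel :: ((real \<times> real) \<times> (real \<times> real)) measure))"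

end

theory Submission
  imports Defs
begin

text \<open>
  Write \<open>p \<oplus> q = (\<xi>\<^sub>1 + \<xi>\<^sub>2, \<mu>\<^sub>1 + \<mu>\<^sub>2 + \<Omega>(\<xi>\<^sub>1, \<xi>\<^sub>2))\<close>
  (\<open>Omega_add\<close>), so that \<open>J(f\<^sub>1, f\<^sub>2, f\<^sub>3) = \<integral>\<integral> f\<^sub>1(p) f\<^sub>2(q) f\<^sub>3(p \<oplus> q)\<close>.
  For fixed \<open>p\<close>, the solution \<open>q = r \<ominus> p\<close> (\<open>Omega_sub r p\<close>) of \<open>p \<oplus> q = r\<close>
  depends on \<open>r\<close> through a translation followed by a shear, so it preserves
  Lebesgue measure. Substituting \<open>r = p \<oplus> q\<close> and applying Cauchy-Schwarz in
  \<open>p\<close> and then in \<open>r\<close> gives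
  \<open>|J|\<^sup>2 \<le> M \<parallel>f\<^sub>1\<parallel>\<^sup>2 \<parallel>f\<^sub>2\<parallel>\<^sup>2 \<parallel>f\<^sub>3\<parallel>\<^sup>2\<close>,
  where \<open>M\<close> bounds the measure of the fibres
  \<open>{p \<in> supp f\<^sub>1. r \<ominus> p \<in> supp f\<^sub>2}\<close> for \<open>r \<in> supp f\<^sub>3\<close>.
  The form is invariant under exchanging \<open>f\<^sub>1, f\<^sub>2\<close> and under replacing
  \<open>(f\<^sub>2, f\<^sub>3)\<close> by the reflected \<open>(f\<^sub>3(-\<cdot>), f\<^sub>2(-\<cdot>))\<close>,
  so any two of the three functions may play the roles of \<open>f\<^sub>1, f\<^sub>2\<close>.

  For dyadic boxes a fibre has measure at most the product of the smaller widths, which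
  gives (a). For (b) and (c) one measures the \<open>\<xi>\<close>-sections of a fibre instead:
  they are sublevel sets of \<open>\<xi> \<mapsto> \<Omega>(\<xi>, \<zeta> - \<xi>)\<close>, which is linear
  with slope \<open>\<plusminus>2\<zeta>\<close> where \<open>\<xi>\<close> and \<open>\<zeta> - \<xi>\<close> have opposite signs
  and a parabola with vertex \<open>\<zeta>/2\<close> where they have the same sign. Separated
  frequencies keep \<open>\<xi>\<close> away from the vertex, which gives (b); without separation
  the parabola costs a square root, which gives (c).
\<close>

section \<open>Lebesgue measure on the plane\<close>

abbreviation lborel2 :: "(real \<times> real) measure" where
  "lborel2 \<equiv> lborel \<Otimes>\<^sub>M lborel"

lemma sets_lborel2[measurable_cong]: "sets lborel2 = sets (borel \<Otimes>\<^sub>M borel)"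
  by (intro sets_pair_measure_cong) simp_all

lemma space_lborel2[simp]: "space lborel2 = UNIV"
  by (simp add: space_pair_measure)

lemma space_borel_pair[simp]: "space (borel \<Otimes>\<^sub>M borel) = (UNIV :: (real \<times> real) set)"
  by (simp add: space_pair_measure)

lemma sigma_finite_lborel2: "sigma_finite_measure lborel2"
  by (simp add: lborel_prod sigma_finite_lborel)

interpretation lborel2_pair: pair_sigma_finite lborel2 lborel2
  using sigma_finite_lborel2 by (simp add: pair_sigma_finite_def)

lemma uminus_pair_measurable[measurable]:
  assumes [measurable]: "f \<in> M \<rightarrow>\<^sub>M borel \<Otimes>\<^sub>M borel"
  shows "(\<lambda>x. - f x :: real \<times> real) \<in> M \<rightarrow>\<^sub>M borel \<Otimes>\<^sub>M borel"
  unfolding uminus_prod_def by measurable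

lemma nn_integral_lborel2_translate:
  fixes H :: "real \<times> real \<Rightarrow> ennreal"
  assumes "H \<in> borel_measurable lborel2"
  shows "(\<integral>\<^sup>+r. H (r + c) \<partial>lborel2) = (\<integral>\<^sup>+r. H r \<partial>lborel2)"
proof -
  have [measurable]: "H \<in> borel_measurable borel"
    using assms by (simp add: lborel_prod)
  have "(\<integral>\<^sup>+r. H r \<partial>lborel) = (\<integral>\<^sup>+r. H r \<partial>distr lborel borel ((+) c))"
    by (simp add: lborel_distr_plus)
  also have "\<dots> = (\<integral>\<^sup>+r. H (r + c) \<partial>lborel)"
    by (subst nn_integral_distr) (auto simp: add.commute)
  finally show ?thesis
    by (simp add: lborel_prod)
qed

lemma nn_integral_lborel2_uminus:
  fixes H :: "real \<times> real \<Rightarrow> ennreal"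
  assumes "H \<in> borel_measurable lborel2"
  shows "(\<integral>\<^sup>+r. H (- r) \<partial>lborel2) = (\<integral>\<^sup>+r. H r \<partial>lborel2)"
proof -
  have [measurable]: "H \<in> borel_measurable borel"
    using assms by (simp add: lborel_prod)
  have "(\<integral>\<^sup>+r. H r \<partial>lborel) = (\<integral>\<^sup>+r. H r \<partial>distr lborel borel uminus)"
    using lborel_affine[of "-1" "0 :: real \<times> real"] by (simp add: density_1)
  also have "\<dots> = (\<integral>\<^sup>+r. H (- r) \<partial>lborel)"
    by (subst nn_integral_distr) auto
  finally show ?thesis
    by (simp add: lborel_prod)
qed

lemma nn_integral_lborel2_shear:
  fixes H :: "real \<times> real \<Rightarrow> ennreal" and g :: "real \<Rightarrow> real"
  assumes [measurable]: "H \<in> borel_measurable lborel2" "g \<in> borel_measurable borel"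
  shows "(\<integral>\<^sup>+r. H (fst r, snd r + g (fst r)) \<partial>lborel2) = (\<integral>\<^sup>+r. H r \<partial>lborel2)"
proof -
  have "(\<lambda>r. H (fst r, snd r + g (fst r))) \<in> borel_measurable lborel2"
    by measurable
  then have "(\<integral>\<^sup>+r. H (fst r, snd r + g (fst r)) \<partial>lborel2) = (\<integral>\<^sup>+x. \<integral>\<^sup>+y. H (x, y + g x) \<partial>lborel \<partial>lborel)"
    by (simp add: lborel.nn_integral_fst[symmetric])
  also have "\<dots> = (\<integral>\<^sup>+x. \<integral>\<^sup>+y. H (x, y) \<partial>lborel \<partial>lborel)"
  proof (rule nn_integral_cong)
    fix x
    show "(\<integral>\<^sup>+y. H (x, y + g x) \<partial>lborel) = (\<integral>\<^sup>+y. H (x, y) \<partial>lborel)"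
      using nn_integral_real_affine[of "\<lambda>y. H (x, y)" 1 "g x"] by (simp add: add.commute)
  qed
  also have "\<dots> = (\<integral>\<^sup>+r. H r \<partial>lborel2)"
    by (rule lborel.nn_integral_fst) measurable
  finally show ?thesis .
qed

lemma emeasure_lborel2_le_vertical_sections:
  assumes [measurable]: "A \<in> sets lborel2" "B \<in> sets lborel"
    and sections: "\<And>x. emeasure lborel {y. (x, y) \<in> A} \<le> ennreal c"
    and base: "\<And>x y. (x, y) \<in> A \<Longrightarrow> x \<in> B"
  shows "emeasure lborel2 A \<le> ennreal c * emeasure lborel B"
proof -
  have "emeasure lborel2 A = (\<integral>\<^sup>+x. emeasure lborel (Pair x -` A) \<partial>lborel)"
    by (rule lborel.emeasure_pair_measure_alt) measurable
  also have "\<dots> \<le> (\<integral>\<^sup>+x. ennreal c * indicator B x \<partial>lborel)"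
  proof (rule nn_integral_mono)
    fix x
    show "emeasure lborel (Pair x -` A) \<le> ennreal c * indicator B x"
    proof (cases "x \<in> B")
      case True
      then show ?thesis
        using sections[of x] by (simp add: vimage_def)
    next
      case False
      then have "Pair x -` A = {}"
        using base by auto
      then show ?thesis
        by simp
    qed
  qed
  also have "\<dots> = ennreal c * emeasure lborel B"
    by (rule nn_integral_cmult_indicator) measurable
  finally show ?thesis .
qed

lemma emeasure_lborel2_le_horizontal_sections:
  assumes [measurable]: "A \<in> sets lborel2" "B \<in> sets lborel"
    and sections: "\<And>y. emeasure lborel {x. (x, y) \<in> A} \<le> ennreal c"
    and base: "\<And>x y. (x, y) \<in> A \<Longrightarrow> y \<in> B"
  shows "emeasure lborel2 A \<le> ennreal c * emeasure lborel B"
proof -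
  have "emeasure lborel2 A = (\<integral>\<^sup>+y. emeasure lborel ((\<lambda>x. (x, y)) -` A) \<partial>lborel)"
    by (rule lborel_pair.emeasure_pair_measure_alt2) measurable
  also have "\<dots> \<le> (\<integral>\<^sup>+y. ennreal c * indicator B y \<partial>lborel)"
  proof (rule nn_integral_mono)
    fix y
    show "emeasure lborel ((\<lambda>x. (x, y)) -` A) \<le> ennreal c * indicator B y"
    proof (cases "y \<in> B")
      case True
      then show ?thesis
        using sections[of y] by (simp add: vimage_def)
    next
      case False
      then have "(\<lambda>x. (x, y)) -` A = {}"
        using base by auto
      then show ?thesis
        by simp
    qed
  qed
  also have "\<dots> = ennreal c * emeasure lborel B"
    by (rule nn_integral_cmult_indicator) measurable
  finally show ?thesis .
qed

section \<open>The twisted addition\<close>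

lemma Omega_measurable[measurable]:
  assumes [measurable]: "f \<in> borel_measurable M" "g \<in> borel_measurable M"
  shows "(\<lambda>x. Omega (f x) (g x)) \<in> borel_measurable M"
  unfolding Omega_def omega_def by measurable

lemma Omega_commute: "Omega a b = Omega b a"
  by (simp add: Omega_def add.commute)

lemma Omega_reflect: "Omega a (- b - a) = Omega a b"
  by (simp add: Omega_def omega_def algebra_simps abs_minus_commute)

definition Omega_add :: "real \<times> real \<Rightarrow> real \<times> real \<Rightarrow> real \<times> real" where
  "Omega_add p q = (fst p + fst q, snd p + snd q + Omega (fst p) (fst q))"

definition Omega_sub :: "real \<times> real \<Rightarrow> real \<times> real \<Rightarrow> real \<times> real" where
  "Omega_sub r p = (fst r - fst p, snd r - snd p - Omega (fst p) (fst r - fst p))"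

lemma Omega_add_sub_cancel[simp]: "Omega_add p (Omega_sub r p) = r"
  by (simp add: Omega_add_def Omega_sub_def)

lemma Omega_sub_add_cancel[simp]: "Omega_sub (Omega_add p q) p = q"
  by (simp add: Omega_add_def Omega_sub_def)

lemma Omega_add_commute: "Omega_add p q = Omega_add q p"
  by (simp add: Omega_add_def Omega_commute add.commute)

lemma Omega_sub_uminus: "Omega_sub (- r) p = - Omega_add p r"
  using Omega_reflect[of "fst p" "fst r"] by (simp add: Omega_sub_def Omega_add_def algebra_simps)

lemma Omega_add_measurable[measurable]:
  assumes [measurable]: "f \<in> M \<rightarrow>\<^sub>M borel \<Otimes>\<^sub>M borel" "g \<in> M \<rightarrow>\<^sub>M borel \<Otimes>\<^sub>M borel"
  shows "(\<lambda>x. Omega_add (f x) (g x)) \<in> M \<rightarrow>\<^sub>M borel \<Otimes>\<^sub>M borel"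
  unfolding Omega_add_def by measurable

lemma Omega_sub_measurable[measurable]:
  assumes [measurable]: "f \<in> M \<rightarrow>\<^sub>M borel \<Otimes>\<^sub>M borel" "g \<in> M \<rightarrow>\<^sub>M borel \<Otimes>\<^sub>M borel"
  shows "(\<lambda>x. Omega_sub (f x) (g x)) \<in> M \<rightarrow>\<^sub>M borel \<Otimes>\<^sub>M borel"
  unfolding Omega_sub_def by measurable

lemma nn_integral_Omega_sub:
  fixes H :: "real \<times> real \<Rightarrow> ennreal"
  assumes [measurable]: "H \<in> borel_measurable lborel2"
  shows "(\<integral>\<^sup>+r. H (Omega_sub r p) \<partial>lborel2) = (\<integral>\<^sup>+r. H r \<partial>lborel2)"
proof -
  define G where "G s = H (fst s, snd s - Omega (fst p) (fst s))" for s
  have [measurable]: "G \<in> borel_measurable lborel2"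
    unfolding G_def by measurable
  have "(\<integral>\<^sup>+r. H (Omega_sub r p) \<partial>lborel2) = (\<integral>\<^sup>+r. G (r + - p) \<partial>lborel2)"
    by (simp add: G_def Omega_sub_def)
  also have "\<dots> = (\<integral>\<^sup>+r. G r \<partial>lborel2)"
    by (rule nn_integral_lborel2_translate) measurable
  also have "\<dots> = (\<integral>\<^sup>+r. H r \<partial>lborel2)"
    unfolding G_def using nn_integral_lborel2_shear[of H "\<lambda>x. - Omega (fst p) x"] by simp
  finally show ?thesis .
qed

section \<open>A Cauchy-Schwarz bound by fibre measures\<close>

definition Jnn ::
  "(real \<times> real \<Rightarrow> ennreal) \<Rightarrow> (real \<times> real \<Rightarrow> ennreal) \<Rightarrow> (real \<times> real \<Rightarrow> ennreal) \<Rightarrow> ennreal" where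
  "Jnn F1 F2 F3 = (\<integral>\<^sup>+p. \<integral>\<^sup>+q. F1 p * F2 q * F3 (Omega_add p q) \<partial>lborel2 \<partial>lborel2)"

definition nn_sqnorm :: "(real \<times> real \<Rightarrow> ennreal) \<Rightarrow> ennreal" where
  "nn_sqnorm F = (\<integral>\<^sup>+p. F p ^ 2 \<partial>lborel2)"

lemma nn_sqnorm_uminus:
  assumes [measurable]: "F \<in> borel_measurable lborel2"
  shows "nn_sqnorm (\<lambda>r. F (- r)) = nn_sqnorm F"
  unfolding nn_sqnorm_def by (rule nn_integral_lborel2_uminus) measurable

lemma Jnn_swap:
  assumes [measurable]: "F1 \<in> borel_measurable lborel2" "F2 \<in> borel_measurable lborel2"
    "F3 \<in> borel_measurable lborel2"
  shows "Jnn F1 F2 F3 = Jnn F2 F1 F3"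
proof -
  have "Jnn F1 F2 F3 = (\<integral>\<^sup>+q. \<integral>\<^sup>+p. F1 p * F2 q * F3 (Omega_add p q) \<partial>lborel2 \<partial>lborel2)"
    unfolding Jnn_def by (rule lborel2_pair.Fubini') measurable
  then show ?thesis
    unfolding Jnn_def by (simp add: Omega_add_commute mult_ac)
qed

lemma Jnn_reflect:
  assumes [measurable]: "F1 \<in> borel_measurable lborel2" "F2 \<in> borel_measurable lborel2"
    "F3 \<in> borel_measurable lborel2"
  shows "Jnn F1 F2 F3 = Jnn F1 (\<lambda>r. F3 (- r)) (\<lambda>r. F2 (- r))"
  unfolding Jnn_def
proof (rule nn_integral_cong)
  fix p
  have m1: "(\<lambda>q. F2 q * F3 (Omega_add p q)) \<in> borel_measurable lborel2"
    by measurable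
  have m2: "(\<lambda>q. F3 (- q) * F2 (- Omega_add p q)) \<in> borel_measurable lborel2"
    by measurable
  from nn_integral_Omega_sub[OF m1, of p]
  have "(\<integral>\<^sup>+q. F2 q * F3 (Omega_add p q) \<partial>lborel2) = (\<integral>\<^sup>+r. F2 (Omega_sub r p) * F3 r \<partial>lborel2)"
    by simp
  also have "\<dots> = (\<integral>\<^sup>+r. F2 (Omega_sub (- r) p) * F3 (- r) \<partial>lborel2)"
    by (rule nn_integral_lborel2_uminus[symmetric]) measurable
  also have "\<dots> = (\<integral>\<^sup>+q. F3 (- q) * F2 (- Omega_add p q) \<partial>lborel2)"
    by (simp add: Omega_sub_uminus mult.commute)
  finally have inner: "(\<integral>\<^sup>+q. F2 q * F3 (Omega_add p q) \<partial>lborel2)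
      = (\<integral>\<^sup>+q. F3 (- q) * F2 (- Omega_add p q) \<partial>lborel2)" .
  show "(\<integral>\<^sup>+q. F1 p * F2 q * F3 (Omega_add p q) \<partial>lborel2)
      = (\<integral>\<^sup>+q. F1 p * F3 (- q) * F2 (- Omega_add p q) \<partial>lborel2)"
    using inner nn_integral_cmult[OF m1, of "F1 p"] nn_integral_cmult[OF m2, of "F1 p"]
    by (simp add: mult.assoc)
qed

definition fibre ::
  "(real \<times> real) set \<Rightarrow> (real \<times> real) set \<Rightarrow> real \<times> real \<Rightarrow> (real \<times> real) set" where
  "fibre S1 S2 r = {p \<in> S1. Omega_sub r p \<in> S2}"

lemma fibre_measurable[measurable]:
  "S1 \<in> sets lborel2 \<Longrightarrow> S2 \<in> sets lborel2 \<Longrightarrow> fibre S1 S2 r \<in> sets lborel2"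
proof -
  assume [measurable]: "S1 \<in> sets lborel2" "S2 \<in> sets lborel2"
  have "fibre S1 S2 r = {p \<in> space lborel2. p \<in> S1 \<and> Omega_sub r p \<in> S2}"
    by (simp add: fibre_def)
  also have "\<dots> \<in> sets lborel2"
    by measurable
  finally show ?thesis .
qed

lemma Jnn_eq_nn_integral_convolution:
  assumes [measurable]: "F1 \<in> borel_measurable lborel2" "F2 \<in> borel_measurable lborel2"
    "F3 \<in> borel_measurable lborel2"
  shows "Jnn F1 F2 F3 = (\<integral>\<^sup>+r. F3 r * (\<integral>\<^sup>+p. F1 p * F2 (Omega_sub r p) \<partial>lborel2) \<partial>lborel2)"
proof -
  have "Jnn F1 F2 F3 = (\<integral>\<^sup>+p. \<integral>\<^sup>+r. F1 p * F2 (Omega_sub r p) * F3 r \<partial>lborel2 \<partial>lborel2)"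
    unfolding Jnn_def
  proof (rule nn_integral_cong)
    fix p
    have "(\<lambda>q. F1 p * F2 q * F3 (Omega_add p q)) \<in> borel_measurable lborel2"
      by measurable
    from nn_integral_Omega_sub[OF this, of p]
    show "(\<integral>\<^sup>+q. F1 p * F2 q * F3 (Omega_add p q) \<partial>lborel2)
        = (\<integral>\<^sup>+r. F1 p * F2 (Omega_sub r p) * F3 r \<partial>lborel2)"
      by simp
  qed
  also have "\<dots> = (\<integral>\<^sup>+r. \<integral>\<^sup>+p. F1 p * F2 (Omega_sub r p) * F3 r \<partial>lborel2 \<partial>lborel2)"
    by (rule lborel2_pair.Fubini') measurable
  also have "\<dots> = (\<integral>\<^sup>+r. F3 r * (\<integral>\<^sup>+p. F1 p * F2 (Omega_sub r p) \<partial>lborel2) \<partial>lborel2)"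
    by (intro nn_integral_cong, subst nn_integral_cmult[symmetric]) (measurable, simp add: mult_ac)
  finally show ?thesis .
qed

lemma nn_integral_convolution_sq:
  assumes [measurable]: "F1 \<in> borel_measurable lborel2" "F2 \<in> borel_measurable lborel2"
  shows "(\<integral>\<^sup>+r. \<integral>\<^sup>+p. F1 p ^ 2 * F2 (Omega_sub r p) ^ 2 \<partial>lborel2 \<partial>lborel2) = nn_sqnorm F1 * nn_sqnorm F2"
proof -
  have "(\<integral>\<^sup>+r. \<integral>\<^sup>+p. F1 p ^ 2 * F2 (Omega_sub r p) ^ 2 \<partial>lborel2 \<partial>lborel2)
      = (\<integral>\<^sup>+p. \<integral>\<^sup>+r. F1 p ^ 2 * F2 (Omega_sub r p) ^ 2 \<partial>lborel2 \<partial>lborel2)"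
    by (rule lborel2_pair.Fubini') measurable
  also have "\<dots> = (\<integral>\<^sup>+p. F1 p ^ 2 * nn_sqnorm F2 \<partial>lborel2)"
  proof (rule nn_integral_cong)
    fix p
    have "(\<integral>\<^sup>+r. F1 p ^ 2 * F2 (Omega_sub r p) ^ 2 \<partial>lborel2)
        = F1 p ^ 2 * (\<integral>\<^sup>+r. F2 (Omega_sub r p) ^ 2 \<partial>lborel2)"
      by (rule nn_integral_cmult) measurable
    also have "(\<integral>\<^sup>+r. F2 (Omega_sub r p) ^ 2 \<partial>lborel2) = nn_sqnorm F2"
      unfolding nn_sqnorm_def by (rule nn_integral_Omega_sub) measurable
    finally show "(\<integral>\<^sup>+r. F1 p ^ 2 * F2 (Omega_sub r p) ^ 2 \<partial>lborel2) = F1 p ^ 2 * nn_sqnorm F2" .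
  qed
  also have "\<dots> = nn_sqnorm F1 * nn_sqnorm F2"
    unfolding nn_sqnorm_def by (rule nn_integral_multc) measurable
  finally show ?thesis .
qed

lemma convolution_sq_le_emeasure_fibre:
  assumes [measurable]: "F1 \<in> borel_measurable lborel2" "F2 \<in> borel_measurable lborel2"
    "S1 \<in> sets lborel2" "S2 \<in> sets lborel2"
    and "\<And>p. p \<notin> S1 \<Longrightarrow> F1 p = 0" "\<And>q. q \<notin> S2 \<Longrightarrow> F2 q = 0"
  shows "(\<integral>\<^sup>+p. F1 p * F2 (Omega_sub r p) \<partial>lborel2)\<^sup>2
    \<le> emeasure lborel2 (fibre S1 S2 r) * (\<integral>\<^sup>+p. F1 p ^ 2 * F2 (Omega_sub r p) ^ 2 \<partial>lborel2)"
proof -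
  let ?A = "fibre S1 S2 r"
  have A: "?A \<in> sets lborel2"
    by measurable
  have "(\<integral>\<^sup>+p. F1 p * F2 (Omega_sub r p) \<partial>lborel2)
      = (\<integral>\<^sup>+p. indicator ?A p * (F1 p * F2 (Omega_sub r p)) \<partial>lborel2)"
  proof (rule nn_integral_cong)
    fix p
    show "F1 p * F2 (Omega_sub r p) = indicator ?A p * (F1 p * F2 (Omega_sub r p))"
      using assms(5)[of p] assms(6)[of "Omega_sub r p"] by (auto simp: fibre_def indicator_def)
  qed
  also have "(\<dots>)\<^sup>2 \<le> (\<integral>\<^sup>+p. (indicator ?A p)\<^sup>2 \<partial>lborel2) * (\<integral>\<^sup>+p. (F1 p * F2 (Omega_sub r p))\<^sup>2 \<partial>lborel2)"
    by (rule Cauchy_Schwarz_nn_integral) measurable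
  also have "(\<lambda>p. (indicator ?A p :: ennreal)\<^sup>2) = indicator ?A"
    by (auto simp: indicator_def fun_eq_iff)
  finally show ?thesis
    using A by (simp add: power_mult_distrib)
qed

lemma Jnn_sq_le_fibre_bound:
  assumes [measurable]: "F1 \<in> borel_measurable lborel2" "F2 \<in> borel_measurable lborel2"
    "F3 \<in> borel_measurable lborel2" "S1 \<in> sets lborel2" "S2 \<in> sets lborel2"
    and supp: "\<And>r. r \<notin> S1 \<Longrightarrow> F1 r = 0" "\<And>r. r \<notin> S2 \<Longrightarrow> F2 r = 0" "\<And>r. r \<notin> S3 \<Longrightarrow> F3 r = 0"
    and fibre_bound: "\<And>r. r \<in> S3 \<Longrightarrow> emeasure lborel2 (fibre S1 S2 r) \<le> M"
  shows "(Jnn F1 F2 F3)\<^sup>2 \<le> M * (nn_sqnorm F1 * nn_sqnorm F2 * nn_sqnorm F3)"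
proof -
  define T where "T = {r \<in> space lborel2. F3 r \<noteq> 0}"
  define W where "W r = (\<integral>\<^sup>+p. F1 p * F2 (Omega_sub r p) \<partial>lborel2) * indicator T r" for r
  define V where "V r = (\<integral>\<^sup>+p. F1 p ^ 2 * F2 (Omega_sub r p) ^ 2 \<partial>lborel2)" for r
  have [measurable]: "T \<in> sets lborel2"
    unfolding T_def by measurable
  have [measurable]: "W \<in> borel_measurable lborel2" "V \<in> borel_measurable lborel2"
    unfolding W_def V_def by measurable
  have W_sq: "(W r)\<^sup>2 \<le> M * V r" for r
  proof (cases "r \<in> T")
    case True
    then have "(W r)\<^sup>2 \<le> emeasure lborel2 (fibre S1 S2 r) * V r"
      unfolding W_def V_def by (simp add: convolution_sq_le_emeasure_fibre[OF assms(1,2,4,5) supp(1,2)])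
    also have "\<dots> \<le> M * V r"
    proof (rule mult_right_mono)
      show "emeasure lborel2 (fibre S1 S2 r) \<le> M"
        using fibre_bound[of r] supp(3)[of r] True by (auto simp: T_def)
    qed simp
    finally show ?thesis .
  qed (simp add: W_def)
  have "Jnn F1 F2 F3 = (\<integral>\<^sup>+r. F3 r * W r \<partial>lborel2)"
    unfolding Jnn_eq_nn_integral_convolution[OF assms(1-3)] W_def T_def
    by (intro nn_integral_cong) (simp add: indicator_def)
  then have "(Jnn F1 F2 F3)\<^sup>2 \<le> nn_sqnorm F3 * (\<integral>\<^sup>+r. (W r)\<^sup>2 \<partial>lborel2)"
    unfolding nn_sqnorm_def by (simp add: Cauchy_Schwarz_nn_integral)
  also have "\<dots> \<le> nn_sqnorm F3 * (\<integral>\<^sup>+r. M * V r \<partial>lborel2)"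
    using W_sq by (intro mult_left_mono nn_integral_mono) auto
  also have "(\<integral>\<^sup>+r. M * V r \<partial>lborel2) = M * (nn_sqnorm F1 * nn_sqnorm F2)"
    unfolding V_def by (simp add: nn_integral_cmult nn_integral_convolution_sq)
  finally show ?thesis
    by (simp add: mult_ac)
qed

section \<open>Sublevel sets of \<open>\<Omega>\<close>\<close>

lemma emeasure_lborel_le_interval:
  fixes a r :: real
  assumes "S \<subseteq> {a - r .. a + r}" "0 \<le> r"
  shows "emeasure lborel S \<le> ennreal (2 * r)"
proof -
  have "emeasure lborel S \<le> emeasure lborel {a - r .. a + r}"
    by (rule emeasure_mono[OF assms(1)]) simp
  also have "\<dots> = ennreal (2 * r)"
    using assms(2) by simp
  finally show ?thesis .
qed

lemma emeasure_two_intervals_le: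
  fixes a b r s :: real
  assumes "0 \<le> r" "0 \<le> s"
  shows "emeasure lborel {x. \<bar>x - a\<bar> \<le> r \<and> \<bar>x - b\<bar> \<le> s} \<le> ennreal (2 * min r s)"
proof (cases "r \<le> s")
  case True
  then show ?thesis
    using assms by (intro emeasure_lborel_le_interval[where a=a]) (auto simp: abs_le_iff)
next
  case False
  then show ?thesis
    using assms by (intro emeasure_lborel_le_interval[where a=b]) (auto simp: abs_le_iff)
qed

lemma emeasure_linear_sublevel_le:
  fixes a b w :: real
  assumes "b \<noteq> 0" "0 \<le> w"
  shows "emeasure lborel {x. \<bar>a + b * x\<bar> \<le> w} \<le> ennreal (2 * w / \<bar>b\<bar>)"
proof -
  have "{x. \<bar>a + b * x\<bar> \<le> w} \<subseteq> {- a / b - w / \<bar>b\<bar> .. - a / b + w / \<bar>b\<bar>}"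
  proof
    fix x
    assume "x \<in> {x. \<bar>a + b * x\<bar> \<le> w}"
    then have "\<bar>b\<bar> * \<bar>x - (- a / b)\<bar> \<le> w"
      using assms by (simp add: abs_mult[symmetric] algebra_simps)
    then have "\<bar>x - (- a / b)\<bar> \<le> w / \<bar>b\<bar>"
      using assms by (simp add: field_simps mult.commute)
    then show "x \<in> {- a / b - w / \<bar>b\<bar> .. - a / b + w / \<bar>b\<bar>}"
      by (auto simp: abs_le_iff)
  qed
  from emeasure_lborel_le_interval[OF this] assms show ?thesis
    by simp
qed

lemma interval_width_le_of_squares:
  fixes lo hi w :: real
  assumes "0 \<le> lo" "lo \<le> hi" "hi\<^sup>2 \<le> lo\<^sup>2 + w"
  shows "hi - lo \<le> sqrt w" and "0 < lo \<Longrightarrow> hi - lo \<le> w / (2 * lo)"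
proof -
  have prod: "(hi - lo) * (hi + lo) \<le> w"
    using assms(3) by (simp add: power2_eq_square algebra_simps)
  have "(hi - lo)\<^sup>2 \<le> (hi - lo) * (hi + lo)"
    using assms(1,2) by (simp add: power2_eq_square mult_left_mono)
  then show "hi - lo \<le> sqrt w"
    using prod by (intro real_le_rsqrt) linarith
  assume "0 < lo"
  have "(hi - lo) * (2 * lo) \<le> (hi - lo) * (hi + lo)"
    using assms(2) by (intro mult_left_mono) auto
  with prod \<open>0 < lo\<close> show "hi - lo \<le> w / (2 * lo)"
    by (simp add: field_simps)
qed

lemma emeasure_lborel_annulus_le:
  fixes c lo hi :: real
  assumes "lo \<le> hi"
  shows "emeasure lborel {x. lo \<le> \<bar>x - c\<bar> \<and> \<bar>x - c\<bar> \<le> hi} \<le> ennreal (2 * (hi - lo))"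
proof -
  have "{x. lo \<le> \<bar>x - c\<bar> \<and> \<bar>x - c\<bar> \<le> hi} \<subseteq> {c - hi .. c - lo} \<union> {c + lo .. c + hi}"
    by (auto simp: abs_if)
  then have "emeasure lborel {x. lo \<le> \<bar>x - c\<bar> \<and> \<bar>x - c\<bar> \<le> hi}
      \<le> emeasure lborel ({c - hi .. c - lo} \<union> {c + lo .. c + hi})"
    by (rule emeasure_mono) simp
  also have "\<dots> \<le> emeasure lborel {c - hi .. c - lo} + emeasure lborel {c + lo .. c + hi}"
    by (rule emeasure_subadditive) auto
  also have "\<dots> = ennreal (2 * (hi - lo))"
    using assms by (simp add: ennreal_plus[symmetric] del: ennreal_plus)
  finally show ?thesis .
qed

lemma quadratic_sublevel_subset_annulus:
  fixes a c w \<delta> :: real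
  defines "lo \<equiv> max \<delta> (sqrt (max 0 ((a - w) / 2)))" and "hi \<equiv> sqrt (max 0 ((a + w) / 2))"
  shows "{x. \<bar>a - 2 * (x - c)\<^sup>2\<bar> \<le> w \<and> \<delta> \<le> \<bar>x - c\<bar>} \<subseteq> {x. lo \<le> \<bar>x - c\<bar> \<and> \<bar>x - c\<bar> \<le> hi}"
proof
  fix x
  assume "x \<in> {x. \<bar>a - 2 * (x - c)\<^sup>2\<bar> \<le> w \<and> \<delta> \<le> \<bar>x - c\<bar>}"
  then have x: "\<bar>a - 2 * (x - c)\<^sup>2\<bar> \<le> w" "\<delta> \<le> \<bar>x - c\<bar>"
    by auto
  have "(x - c)\<^sup>2 \<le> (a + w) / 2"
    using x(1) by (auto simp: abs_le_iff)
  then have "sqrt ((x - c)\<^sup>2) \<le> hi"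
    unfolding hi_def by (intro real_sqrt_le_mono) (simp add: le_max_iff_disj)
  moreover have "sqrt (max 0 ((a - w) / 2)) \<le> sqrt ((x - c)\<^sup>2)"
    using x(1) by (intro real_sqrt_le_mono) (auto simp: abs_le_iff)
  ultimately show "x \<in> {x. lo \<le> \<bar>x - c\<bar> \<and> \<bar>x - c\<bar> \<le> hi}"
    using x(2) by (simp add: lo_def)
qed

lemma emeasure_quadratic_sublevel_le:
  fixes a c w \<delta> :: real
  assumes w: "0 \<le> w" and \<delta>: "0 \<le> \<delta>"
  defines "X \<equiv> {x. \<bar>a - 2 * (x - c)\<^sup>2\<bar> \<le> w \<and> \<delta> \<le> \<bar>x - c\<bar>}"
  shows "emeasure lborel X \<le> ennreal (2 * sqrt w)"
    and "0 < \<delta> \<Longrightarrow> emeasure lborel X \<le> ennreal (w / \<delta>)"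
proof -
  define lo where "lo = max \<delta> (sqrt (max 0 ((a - w) / 2)))"
  define hi where "hi = sqrt (max 0 ((a + w) / 2))"
  have lo: "0 \<le> lo" "\<delta> \<le> lo"
    using \<delta> by (auto simp: lo_def)
  have "(sqrt (max 0 ((a - w) / 2)))\<^sup>2 \<le> lo\<^sup>2"
    unfolding lo_def by (rule power_mono) auto
  then have "(a - w) / 2 \<le> lo\<^sup>2"
    by simp
  then have squares: "hi\<^sup>2 \<le> lo\<^sup>2 + w"
    using w by (cases "0 \<le> a + w") (simp_all add: hi_def add_nonneg_nonneg)
  have sub: "X \<subseteq> {x. lo \<le> \<bar>x - c\<bar> \<and> \<bar>x - c\<bar> \<le> hi}"
    unfolding X_def lo_def hi_def by (rule quadratic_sublevel_subset_annulus)
  have bound: "emeasure lborel X \<le> ennreal (2 * b)" if "lo \<le> hi \<Longrightarrow> hi - lo \<le> b" for b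
  proof (cases "lo \<le> hi")
    case True
    have "emeasure lborel X \<le> emeasure lborel {x. lo \<le> \<bar>x - c\<bar> \<and> \<bar>x - c\<bar> \<le> hi}"
      by (rule emeasure_mono[OF sub]) measurable
    also have "\<dots> \<le> ennreal (2 * (hi - lo))"
      using True by (rule emeasure_lborel_annulus_le)
    also have "\<dots> \<le> ennreal (2 * b)"
      using that True by (simp add: ennreal_leI)
    finally show ?thesis .
  next
    case False
    then have "X = {}"
      using sub by auto
    then show ?thesis
      by simp
  qed
  show "emeasure lborel X \<le> ennreal (2 * sqrt w)"
    using interval_width_le_of_squares(1)[OF lo(1) _ squares] by (intro bound)
  assume "0 < \<delta>"
  have "w / (2 * lo) \<le> w / (2 * \<delta>)"
    using lo \<open>0 < \<delta>\<close> w by (intro divide_left_mono) auto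
  then have "emeasure lborel X \<le> ennreal (2 * (w / (2 * \<delta>)))"
    using interval_width_le_of_squares(2)[OF lo(1) _ squares] lo \<open>0 < \<delta>\<close> by (intro bound) auto
  then show "emeasure lborel X \<le> ennreal (w / \<delta>)"
    by simp
qed

lemma Omega_diagonal_cases:
  fixes x z :: real
  shows "0 \<le> x \<Longrightarrow> 0 \<le> z - x \<Longrightarrow> Omega x (z - x) = z * \<bar>z\<bar> - z\<^sup>2 / 2 - 2 * (x - z / 2)\<^sup>2"
    and "x \<le> 0 \<Longrightarrow> z - x \<le> 0 \<Longrightarrow> Omega x (z - x) = z * \<bar>z\<bar> + z\<^sup>2 / 2 + 2 * (x - z / 2)\<^sup>2"
    and "x \<le> 0 \<Longrightarrow> 0 \<le> z - x \<Longrightarrow> Omega x (z - x) = z * \<bar>z\<bar> - z\<^sup>2 + 2 * z * x"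
    and "0 \<le> x \<Longrightarrow> z - x \<le> 0 \<Longrightarrow> Omega x (z - x) = z * \<bar>z\<bar> + z\<^sup>2 - 2 * z * x"
  by (simp_all add: Omega_def omega_def power2_eq_square algebra_simps)

lemma Omega_sublevel_subset:
  fixes t z w \<delta> :: real
  shows "{x. \<bar>t - Omega x (z - x)\<bar> \<le> w \<and> (0 \<le> x * (z - x) \<longrightarrow> \<delta> \<le> \<bar>x - z / 2\<bar>)}
    \<subseteq> {x. \<bar>(t - z * \<bar>z\<bar> + z\<^sup>2) + (- 2 * z) * x\<bar> \<le> w}
      \<union> {x. \<bar>(t - z * \<bar>z\<bar> - z\<^sup>2) + (2 * z) * x\<bar> \<le> w}
      \<union> {x. \<bar>(z * \<bar>z\<bar> - z\<^sup>2 / 2 - t) - 2 * (x - z / 2)\<^sup>2\<bar> \<le> w \<and> \<delta> \<le> \<bar>x - z / 2\<bar>}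
      \<union> {x. \<bar>(t - z * \<bar>z\<bar> - z\<^sup>2 / 2) - 2 * (x - z / 2)\<^sup>2\<bar> \<le> w \<and> \<delta> \<le> \<bar>x - z / 2\<bar>}"
    (is "?X \<subseteq> ?L1 \<union> ?L2 \<union> ?Q1 \<union> ?Q2")
proof
  fix x
  assume "x \<in> ?X"
  then have sub: "\<bar>t - Omega x (z - x)\<bar> \<le> w" and mid: "0 \<le> x * (z - x) \<Longrightarrow> \<delta> \<le> \<bar>x - z / 2\<bar>"
    by auto
  consider "0 \<le> x" "0 \<le> z - x" | "x \<le> 0" "z - x \<le> 0" | "x \<le> 0" "0 \<le> z - x" | "0 \<le> x" "z - x \<le> 0"
    by linarith
  then show "x \<in> ?L1 \<union> ?L2 \<union> ?Q1 \<union> ?Q2"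
  proof cases
    case 1
    have "\<bar>(z * \<bar>z\<bar> - z\<^sup>2 / 2 - t) - 2 * (x - z / 2)\<^sup>2\<bar> = \<bar>t - Omega x (z - x)\<bar>"
      unfolding Omega_diagonal_cases(1)[OF 1] by (simp add: abs_minus_commute)
    then have "x \<in> ?Q1"
      using sub mid 1 by simp
    then show ?thesis
      by blast
  next
    case 2
    have "\<bar>(t - z * \<bar>z\<bar> - z\<^sup>2 / 2) - 2 * (x - z / 2)\<^sup>2\<bar> = \<bar>t - Omega x (z - x)\<bar>"
      unfolding Omega_diagonal_cases(2)[OF 2] by simp
    then have "x \<in> ?Q2"
      using sub mid 2 by (simp add: mult_nonpos_nonpos)
    then show ?thesis
      by blast
  next
    case 3
    have "\<bar>(t - z * \<bar>z\<bar> + z\<^sup>2) + (- 2 * z) * x\<bar> = \<bar>t - Omega x (z - x)\<bar>"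
      unfolding Omega_diagonal_cases(3)[OF 3] by simp
    then show ?thesis
      using sub by simp
  next
    case 4
    have "\<bar>(t - z * \<bar>z\<bar> - z\<^sup>2) + (2 * z) * x\<bar> = \<bar>t - Omega x (z - x)\<bar>"
      unfolding Omega_diagonal_cases(4)[OF 4] by simp
    then show ?thesis
      using sub by simp
  qed
qed

lemma emeasure_Omega_sublevel_le:
  fixes t z w \<delta> q :: real
  assumes z: "z \<noteq> 0" and w: "0 \<le> w" and q: "0 \<le> q"
    and quadratic: "\<And>a. emeasure lborel {x. \<bar>a - 2 * (x - z / 2)\<^sup>2\<bar> \<le> w \<and> \<delta> \<le> \<bar>x - z / 2\<bar>} \<le> ennreal q"
  shows "emeasure lborel {x. \<bar>t - Omega x (z - x)\<bar> \<le> w \<and> (0 \<le> x * (z - x) \<longrightarrow> \<delta> \<le> \<bar>x - z / 2\<bar>)}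
    \<le> ennreal (2 * w / \<bar>z\<bar> + 2 * q)"
proof -
  define L1 where "L1 = {x. \<bar>(t - z * \<bar>z\<bar> + z\<^sup>2) + (- 2 * z) * x\<bar> \<le> w}"
  define L2 where "L2 = {x. \<bar>(t - z * \<bar>z\<bar> - z\<^sup>2) + (2 * z) * x\<bar> \<le> w}"
  define Q1 where "Q1 = {x. \<bar>(z * \<bar>z\<bar> - z\<^sup>2 / 2 - t) - 2 * (x - z / 2)\<^sup>2\<bar> \<le> w \<and> \<delta> \<le> \<bar>x - z / 2\<bar>}"
  define Q2 where "Q2 = {x. \<bar>(t - z * \<bar>z\<bar> - z\<^sup>2 / 2) - 2 * (x - z / 2)\<^sup>2\<bar> \<le> w \<and> \<delta> \<le> \<bar>x - z / 2\<bar>}"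
  have [measurable]: "L1 \<in> sets lborel" "L2 \<in> sets lborel" "Q1 \<in> sets lborel" "Q2 \<in> sets lborel"
    unfolding L1_def L2_def Q1_def Q2_def by measurable
  have "emeasure lborel L1 \<le> ennreal (2 * w / \<bar>- 2 * z\<bar>)"
    unfolding L1_def using z w by (intro emeasure_linear_sublevel_le) auto
  moreover have "emeasure lborel L2 \<le> ennreal (2 * w / \<bar>2 * z\<bar>)"
    unfolding L2_def using z w by (intro emeasure_linear_sublevel_le) auto
  ultimately have linear: "emeasure lborel L1 \<le> ennreal (w / \<bar>z\<bar>)" "emeasure lborel L2 \<le> ennreal (w / \<bar>z\<bar>)"
    by (simp_all add: abs_mult)
  have "emeasure lborel {x. \<bar>t - Omega x (z - x)\<bar> \<le> w \<and> (0 \<le> x * (z - x) \<longrightarrow> \<delta> \<le> \<bar>x - z / 2\<bar>)}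
      \<le> emeasure lborel (L1 \<union> L2 \<union> Q1 \<union> Q2)"
    unfolding L1_def L2_def Q1_def Q2_def by (rule emeasure_mono[OF Omega_sublevel_subset]) measurable
  also have "\<dots> \<le> emeasure lborel (L1 \<union> L2 \<union> Q1) + emeasure lborel Q2"
    by (rule emeasure_subadditive) measurable
  also have "\<dots> \<le> emeasure lborel (L1 \<union> L2) + emeasure lborel Q1 + emeasure lborel Q2"
    by (intro add_right_mono emeasure_subadditive) measurable
  also have "\<dots> \<le> emeasure lborel L1 + emeasure lborel L2 + emeasure lborel Q1 + emeasure lborel Q2"
    by (intro add_right_mono emeasure_subadditive) measurable
  also have "\<dots> \<le> ennreal (w / \<bar>z\<bar>) + ennreal (w / \<bar>z\<bar>) + ennreal q + ennreal q"
    unfolding Q1_def Q2_def by (intro add_mono linear quadratic)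
  also have "\<dots> = ennreal (2 * w / \<bar>z\<bar> + 2 * q)"
    using w q by (simp add: ennreal_plus[symmetric] del: ennreal_plus)
  finally show ?thesis .
qed

section \<open>Fibres of dyadic boxes\<close>

definition separated :: "real \<Rightarrow> real \<Rightarrow> real \<Rightarrow> bool" where
  "separated P1 P2 P3 \<longleftrightarrow> 32 * min P1 (min P2 P3) \<le> max P1 (max P2 P3)"

lemma separated_imp_unbalanced:
  fixes a b :: real
  assumes "P1 / 2 \<le> a" "a \<le> 2 * P1" "P2 / 2 \<le> b" "b \<le> 2 * P2" "P3 / 2 \<le> a + b" "a + b \<le> 2 * P3"
    and "0 \<le> a" "0 \<le> b" and "separated P1 P2 P3"
  shows "P3 / 8 \<le> \<bar>a - b\<bar>"
  using assms unfolding separated_def by (auto simp: min_def max_def abs_if split: if_splits)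

lemma separated_far_from_midpoint:
  fixes x z :: real
  assumes "P1 / 2 \<le> \<bar>x\<bar>" "\<bar>x\<bar> \<le> 2 * P1" "P2 / 2 \<le> \<bar>z - x\<bar>" "\<bar>z - x\<bar> \<le> 2 * P2"
    "P3 / 2 \<le> \<bar>z\<bar>" "\<bar>z\<bar> \<le> 2 * P3" and "separated P1 P2 P3" and "0 \<le> x * (z - x)"
  shows "P3 / 16 \<le> \<bar>x - z / 2\<bar>"
proof -
  have "\<bar>z\<bar> = \<bar>x\<bar> + \<bar>z - x\<bar>" and "\<bar>x - z / 2\<bar> = \<bar>\<bar>x\<bar> - \<bar>z - x\<bar>\<bar> / 2"
    using assms(8) by (auto simp: zero_le_mult_iff abs_if)
  with separated_imp_unbalanced[of P1 "\<bar>x\<bar>" P2 "\<bar>z - x\<bar>" P3] assms(1-7) show ?thesis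
    by simp
qed

definition dyadic_box :: "real \<Rightarrow> real \<Rightarrow> (real \<times> real) set" where
  "dyadic_box P Q = {r. P / 2 \<le> \<bar>fst r\<bar> \<and> \<bar>fst r\<bar> \<le> 2 * P \<and> \<bar>snd r\<bar> \<le> 2 * Q}"

lemma dyadic_box_measurable[measurable]: "dyadic_box P Q \<in> sets lborel2"
proof -
  have "dyadic_box P Q = {r \<in> space lborel2. P / 2 \<le> \<bar>fst r\<bar> \<and> \<bar>fst r\<bar> \<le> 2 * P \<and> \<bar>snd r\<bar> \<le> 2 * Q}"
    by (simp add: dyadic_box_def)
  also have "\<dots> \<in> sets lborel2"
    by measurable
  finally show ?thesis .
qed

lemma uminus_mem_dyadic_box[simp]: "- r \<in> dyadic_box P Q \<longleftrightarrow> r \<in> dyadic_box P Q"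
  by (simp add: dyadic_box_def)

lemma Idy_times_Itil_subset: "Idy k \<times> Itil j \<subseteq> dyadic_box (2 powr real_of_int k) (2 powr real j)"
proof
  fix r
  assume r: "r \<in> Idy k \<times> Itil j"
  have powr: "(2::real) powr (real_of_int k - 1) = 2 powr real_of_int k / 2"
    "(2::real) powr (real_of_int k + 1) = 2 * 2 powr real_of_int k"
    "(2::real) powr (real j + 1) = 2 * 2 powr real j"
    by (simp_all add: powr_diff powr_add)
  have "\<bar>snd r\<bar> \<le> 2 * 2 powr real j"
    using r by (cases "j = 0") (auto simp: Itil_def Idy_def powr mem_Times_iff abs_le_iff)
  then show "r \<in> dyadic_box (2 powr real_of_int k) (2 powr real j)"
    using r by (auto simp: dyadic_box_def Idy_def powr mem_Times_iff)
qed

lemma mem_fibre_dyadic_box: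
  "(x, y) \<in> fibre (dyadic_box P1 Q1) (dyadic_box P2 Q2) (z, v) \<longleftrightarrow>
    P1 / 2 \<le> \<bar>x\<bar> \<and> \<bar>x\<bar> \<le> 2 * P1 \<and> \<bar>y\<bar> \<le> 2 * Q1 \<and>
    P2 / 2 \<le> \<bar>z - x\<bar> \<and> \<bar>z - x\<bar> \<le> 2 * P2 \<and> \<bar>v - y - Omega x (z - x)\<bar> \<le> 2 * Q2"
  by (simp add: fibre_def dyadic_box_def Omega_sub_def)

lemma emeasure_fibre_le_min:
  assumes "0 \<le> P1" "0 \<le> P2" "0 \<le> Q1" "0 \<le> Q2"
  shows "emeasure lborel2 (fibre (dyadic_box P1 Q1) (dyadic_box P2 Q2) r) \<le> ennreal (16 * min P1 P2 * min Q1 Q2)"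
proof -
  obtain z v where r: "r = (z, v)"
    by (cases r)
  define B where "B = {x. \<bar>x - 0\<bar> \<le> 2 * P1 \<and> \<bar>x - z\<bar> \<le> 2 * P2}"
  have [measurable]: "B \<in> sets lborel"
    unfolding B_def by measurable
  have "emeasure lborel2 (fibre (dyadic_box P1 Q1) (dyadic_box P2 Q2) r)
      \<le> ennreal (2 * min (2 * Q1) (2 * Q2)) * emeasure lborel B"
  proof (rule emeasure_lborel2_le_vertical_sections)
    fix x
    have "{y. (x, y) \<in> fibre (dyadic_box P1 Q1) (dyadic_box P2 Q2) r}
        \<subseteq> {y. \<bar>y - 0\<bar> \<le> 2 * Q1 \<and> \<bar>y - (v - Omega x (z - x))\<bar> \<le> 2 * Q2}"
      by (auto simp: r mem_fibre_dyadic_box abs_minus_commute algebra_simps)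
    then have "emeasure lborel {y. (x, y) \<in> fibre (dyadic_box P1 Q1) (dyadic_box P2 Q2) r}
        \<le> emeasure lborel {y. \<bar>y - 0\<bar> \<le> 2 * Q1 \<and> \<bar>y - (v - Omega x (z - x))\<bar> \<le> 2 * Q2}"
      by (rule emeasure_mono) measurable
    also have "\<dots> \<le> ennreal (2 * min (2 * Q1) (2 * Q2))"
      using assms by (intro emeasure_two_intervals_le) auto
    finally show "emeasure lborel {y. (x, y) \<in> fibre (dyadic_box P1 Q1) (dyadic_box P2 Q2) r}
        \<le> ennreal (2 * min (2 * Q1) (2 * Q2))" .
  next
    fix x y
    assume "(x, y) \<in> fibre (dyadic_box P1 Q1) (dyadic_box P2 Q2) r"
    then show "x \<in> B"
      by (auto simp: r mem_fibre_dyadic_box B_def abs_minus_commute)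
  qed (measurable, measurable)
  also have "\<dots> \<le> ennreal (2 * min (2 * Q1) (2 * Q2)) * ennreal (2 * min (2 * P1) (2 * P2))"
    unfolding B_def using assms by (intro mult_left_mono emeasure_two_intervals_le) auto
  also have "\<dots> = ennreal (16 * min P1 P2 * min Q1 Q2)"
    using assms by (simp add: ennreal_mult[symmetric] min_def)
  finally show ?thesis .
qed

lemma emeasure_fibre_le_of_quadratic_bound:
  assumes "0 < P3" "(z, v) \<in> dyadic_box P3 Q3" "0 \<le> Q1" "0 \<le> Q2" "0 \<le> q"
    and midpoint: "\<And>x y. (x, y) \<in> fibre (dyadic_box P1 Q1) (dyadic_box P2 Q2) (z, v) \<Longrightarrow>
      0 \<le> x * (z - x) \<Longrightarrow> \<delta> \<le> \<bar>x - z / 2\<bar>"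
    and quadratic: "\<And>a. emeasure lborel {x. \<bar>a - 2 * (x - z / 2)\<^sup>2\<bar> \<le> 2 * Q2 \<and> \<delta> \<le> \<bar>x - z / 2\<bar>} \<le> ennreal q"
  shows "emeasure lborel2 (fibre (dyadic_box P1 Q1) (dyadic_box P2 Q2) (z, v))
    \<le> ennreal (4 * Q1 * (8 * Q2 / P3 + 2 * q))"
proof -
  let ?F = "fibre (dyadic_box P1 Q1) (dyadic_box P2 Q2) (z, v)"
  have z: "P3 / 2 \<le> \<bar>z\<bar>" "z \<noteq> 0"
    using assms(1,2) by (auto simp: dyadic_box_def)
  have "emeasure lborel2 ?F \<le> ennreal (8 * Q2 / P3 + 2 * q) * emeasure lborel {- (2 * Q1) .. 2 * Q1}"
  proof (rule emeasure_lborel2_le_horizontal_sections)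
    fix y
    have "{x. (x, y) \<in> ?F}
        \<subseteq> {x. \<bar>(v - y) - Omega x (z - x)\<bar> \<le> 2 * Q2 \<and> (0 \<le> x * (z - x) \<longrightarrow> \<delta> \<le> \<bar>x - z / 2\<bar>)}"
      using midpoint by (auto simp: mem_fibre_dyadic_box)
    then have "emeasure lborel {x. (x, y) \<in> ?F}
        \<le> emeasure lborel {x. \<bar>(v - y) - Omega x (z - x)\<bar> \<le> 2 * Q2 \<and> (0 \<le> x * (z - x) \<longrightarrow> \<delta> \<le> \<bar>x - z / 2\<bar>)}"
      by (rule emeasure_mono) measurable
    also have "\<dots> \<le> ennreal (2 * (2 * Q2) / \<bar>z\<bar> + 2 * q)"
      using z assms(4,5) quadratic by (intro emeasure_Omega_sublevel_le) auto
    also have "\<dots> \<le> ennreal (8 * Q2 / P3 + 2 * q)"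
    proof (intro ennreal_leI add_right_mono)
      have "2 * (2 * Q2) / \<bar>z\<bar> \<le> 2 * (2 * Q2) / (P3 / 2)"
        using z assms(1,4) by (intro divide_left_mono) auto
      then show "2 * (2 * Q2) / \<bar>z\<bar> \<le> 8 * Q2 / P3"
        by simp
    qed
    finally show "emeasure lborel {x. (x, y) \<in> ?F} \<le> ennreal (8 * Q2 / P3 + 2 * q)" .
  next
    fix x y
    assume "(x, y) \<in> ?F"
    then show "y \<in> {- (2 * Q1) .. 2 * Q1}"
      by (auto simp: mem_fibre_dyadic_box abs_le_iff)
  qed (measurable, measurable)
  also have "\<dots> = ennreal (4 * Q1 * (8 * Q2 / P3 + 2 * q))"
    using assms(1,3-5) by (simp add: ennreal_mult''[symmetric] mult_ac del: ennreal_plus)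
  finally show ?thesis .
qed

lemma emeasure_fibre_le_separated:
  assumes "0 < P3" "0 \<le> Q1" "0 \<le> Q2" "r \<in> dyadic_box P3 Q3" "separated P1 P2 P3"
  shows "emeasure lborel2 (fibre (dyadic_box P1 Q1) (dyadic_box P2 Q2) r) \<le> ennreal (288 * Q1 * Q2 / P3)"
proof -
  obtain z v where r: "r = (z, v)"
    by (cases r)
  have "emeasure lborel2 (fibre (dyadic_box P1 Q1) (dyadic_box P2 Q2) r)
      \<le> ennreal (4 * Q1 * (8 * Q2 / P3 + 2 * (2 * Q2 / (P3 / 16))))"
    unfolding r
  proof (rule emeasure_fibre_le_of_quadratic_bound[where \<delta> = "P3 / 16"])
    fix x y
    assume xy: "(x, y) \<in> fibre (dyadic_box P1 Q1) (dyadic_box P2 Q2) (z, v)" "0 \<le> x * (z - x)"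
    have "P3 / 2 \<le> \<bar>z\<bar>" "\<bar>z\<bar> \<le> 2 * P3"
      using assms(4) by (auto simp: r dyadic_box_def)
    with xy show "P3 / 16 \<le> \<bar>x - z / 2\<bar>"
      by (intro separated_far_from_midpoint[OF _ _ _ _ _ _ assms(5)]) (auto simp: mem_fibre_dyadic_box)
  next
    fix a
    show "emeasure lborel {x. \<bar>a - 2 * (x - z / 2)\<^sup>2\<bar> \<le> 2 * Q2 \<and> P3 / 16 \<le> \<bar>x - z / 2\<bar>}
        \<le> ennreal (2 * Q2 / (P3 / 16))"
      using assms(1,3) by (intro emeasure_quadratic_sublevel_le(2)) auto
  qed (use assms in \<open>auto simp: r\<close>)
  also have "4 * Q1 * (8 * Q2 / P3 + 2 * (2 * Q2 / (P3 / 16))) = 288 * Q1 * Q2 / P3"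
    using assms(1) by (simp add: field_simps)
  finally show ?thesis .
qed

lemma emeasure_fibre_le_sqrt:
  assumes "0 < P3" "0 \<le> Q1" "0 \<le> Q2" "r \<in> dyadic_box P3 Q3"
  shows "emeasure lborel2 (fibre (dyadic_box P1 Q1) (dyadic_box P2 Q2) r)
    \<le> ennreal (4 * Q1 * (8 * Q2 / P3 + 4 * sqrt (2 * Q2)))"
proof -
  obtain z v where r: "r = (z, v)"
    by (cases r)
  have "emeasure lborel2 (fibre (dyadic_box P1 Q1) (dyadic_box P2 Q2) r)
      \<le> ennreal (4 * Q1 * (8 * Q2 / P3 + 2 * (2 * sqrt (2 * Q2))))"
    unfolding r
  proof (rule emeasure_fibre_le_of_quadratic_bound[where \<delta> = 0])
    fix a
    show "emeasure lborel {x. \<bar>a - 2 * (x - z / 2)\<^sup>2\<bar> \<le> 2 * Q2 \<and> 0 \<le> \<bar>x - z / 2\<bar>}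
        \<le> ennreal (2 * sqrt (2 * Q2))"
      using assms(3) by (intro emeasure_quadratic_sublevel_le(1)) auto
  qed (use assms in \<open>auto simp: r\<close>)
  then show ?thesis
    by simp
qed

lemma emeasure_fibre_le_sqrt_if_high_frequency:
  assumes "0 \<le> Q1" "0 < Q2" "sqrt Q2 \<le> P3" "r \<in> dyadic_box P3 Q3"
  shows "emeasure lborel2 (fibre (dyadic_box P1 Q1) (dyadic_box P2 Q2) r) \<le> ennreal (56 * Q1 * sqrt Q2)"
proof -
  have "sqrt 2 \<le> (3 / 2 :: real)"
    by (rule real_le_lsqrt) (auto simp: power2_eq_square)
  then have "sqrt 2 * sqrt Q2 \<le> 3 / 2 * sqrt Q2"
    using assms(2) by (intro mult_right_mono) auto
  then have sqrt2: "sqrt (2 * Q2) \<le> 3 / 2 * sqrt Q2"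
    by (simp add: real_sqrt_mult)
  have "0 < sqrt Q2"
    using assms(2) by simp
  then have P3: "0 < P3"
    using assms(3) by linarith
  have "8 * Q2 / P3 \<le> 8 * Q2 / sqrt Q2"
    using assms(2,3) mult_pos_pos[OF P3 \<open>0 < sqrt Q2\<close>] by (intro divide_left_mono) auto
  also have "\<dots> = 8 * sqrt Q2"
    using assms(2) by (simp add: field_simps)
  finally have "8 * Q2 / P3 + 4 * sqrt (2 * Q2) \<le> 14 * sqrt Q2"
    using sqrt2 by linarith
  then have "4 * Q1 * (8 * Q2 / P3 + 4 * sqrt (2 * Q2)) \<le> 4 * Q1 * (14 * sqrt Q2)"
    using assms(1) by (intro mult_left_mono) auto
  then have bound: "4 * Q1 * (8 * Q2 / P3 + 4 * sqrt (2 * Q2)) \<le> 56 * Q1 * sqrt Q2"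
    by simp
  have "emeasure lborel2 (fibre (dyadic_box P1 Q1) (dyadic_box P2 Q2) r)
      \<le> ennreal (4 * Q1 * (8 * Q2 / P3 + 4 * sqrt (2 * Q2)))"
    using assms P3 by (intro emeasure_fibre_le_sqrt) auto
  also have "\<dots> \<le> ennreal (56 * Q1 * sqrt Q2)"
    using bound by (rule ennreal_leI)
  finally show ?thesis .
qed

section \<open>Permuting the three functions\<close>

abbreviation perms3 :: "(nat \<times> nat \<times> nat) set" where
  "perms3 \<equiv> {(1, 2, 3), (2, 1, 3), (1, 3, 2), (3, 1, 2), (2, 3, 1), (3, 2, 1)}"

lemma perms3_min_max:
  fixes x :: "nat \<Rightarrow> 'a::linorder"
  assumes "(a, b, c) \<in> perms3"
  shows "min (x a) (min (x b) (x c)) = min (x 1) (min (x 2) (x 3))"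
    and "max (x a) (max (x b) (x c)) = max (x 1) (max (x 2) (x 3))"
  using assms by (auto simp: ac_simps)

lemma perms3_min_pair:
  fixes x :: "nat \<Rightarrow> 'a::linorder" and y :: "nat \<Rightarrow> 'b::linorder"
  obtains a b c where "(a, b, c) \<in> perms3" "min (x a) (x b) = min (x 1) (min (x 2) (x 3))"
    "min (y a) (y b) = min (y 1) (min (y 2) (y 3))"
proof -
  have argmin: "\<exists>i\<in>{1, 2, 3}. z i = min (z 1) (min (z 2) (z 3))" for z :: "nat \<Rightarrow> 'c::linorder"
    by (simp add: min_def)
  obtain i1 where i1: "i1 \<in> {1, 2, 3}" "x i1 = min (x 1) (min (x 2) (x 3))"
    using argmin[of x] by blast
  obtain i2 where i2: "i2 \<in> {1, 2, 3}" "y i2 = min (y 1) (min (y 2) (y 3))"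
    using argmin[of y] by blast
  have "\<exists>(a, b, c) \<in> perms3. i1 \<in> {a, b} \<and> i2 \<in> {a, b}"
    using i1(1) i2(1) by fastforce
  then obtain a b c where abc: "(a, b, c) \<in> perms3" "i1 \<in> {a, b}" "i2 \<in> {a, b}"
    by blast
  have "min (x a) (x b) = x i1"
    using abc(1,2) i1(2) by (auto simp: min_def)
  moreover have "min (y a) (y b) = y i2"
    using abc(1,3) i2(2) by (auto simp: min_def)
  ultimately show ?thesis
    using that[OF abc(1)] i1(2) i2(2) by simp
qed

lemma perms3_sorted:
  fixes x :: "nat \<Rightarrow> 'a::linorder"
  obtains a b c where "(a, b, c) \<in> perms3" "x a \<le> x b" "x b \<le> x c"
proof -
  have "\<exists>(a, b, c) \<in> perms3. x a \<le> x b \<and> x b \<le> x c"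
    by auto
  then show ?thesis
    using that by blast
qed

lemma perms3_sorted_min_med:
  fixes x :: "nat \<Rightarrow> real"
  assumes "(a, b, c) \<in> perms3" "x a \<le> x b" "x b \<le> x c"
  shows "min (x 1) (min (x 2) (x 3)) = x a" and "med (x 1) (x 2) (x 3) = x b"
  using assms by (auto simp: med_def min_def max_def)

definition nn_supported_in :: "(real \<times> real \<Rightarrow> ennreal) \<Rightarrow> (real \<times> real) set \<Rightarrow> bool" where
  "nn_supported_in F S \<longleftrightarrow> F \<in> borel_measurable lborel2 \<and> (\<forall>r. r \<notin> S \<longrightarrow> F r = 0)"

lemma nn_supported_in_uminus:
  assumes "nn_supported_in F S" "\<And>r. - r \<in> S \<longleftrightarrow> r \<in> S"
  shows "nn_supported_in (\<lambda>r. F (- r)) S"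
proof -
  have [measurable]: "F \<in> borel_measurable lborel2"
    using assms(1) by (simp add: nn_supported_in_def)
  have "(\<lambda>r. F (- r)) \<in> borel_measurable lborel2"
    by measurable
  with assms show ?thesis
    unfolding nn_supported_in_def by blast
qed

lemma Jnn_permute:
  fixes F :: "nat \<Rightarrow> real \<times> real \<Rightarrow> ennreal"
  assumes supp: "\<And>i. i \<in> {1, 2, 3} \<Longrightarrow> nn_supported_in (F i) (S i)"
    and symm: "\<And>i r. - r \<in> S i \<longleftrightarrow> r \<in> S i"
    and perm: "(a, b, c) \<in> perms3"
  obtains G1 G2 G3 where "Jnn (F 1) (F 2) (F 3) = Jnn G1 G2 G3"
    "nn_sqnorm G1 * nn_sqnorm G2 * nn_sqnorm G3 = nn_sqnorm (F 1) * nn_sqnorm (F 2) * nn_sqnorm (F 3)"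
    "nn_supported_in G1 (S a)" "nn_supported_in G2 (S b)" "nn_supported_in G3 (S c)"
proof -
  define R where "R i r = F i (- r)" for i r
  have F: "nn_supported_in (F i) (S i)" and R: "nn_supported_in (R i) (S i)"
    and meas: "F i \<in> borel_measurable lborel2" "R i \<in> borel_measurable lborel2"
    and norm: "nn_sqnorm (R i) = nn_sqnorm (F i)" if "i \<in> {1, 2, 3}" for i
  proof -
    show F: "nn_supported_in (F i) (S i)"
      using supp[OF that] .
    show R: "nn_supported_in (R i) (S i)"
      unfolding R_def using F symm by (rule nn_supported_in_uminus)
    show "F i \<in> borel_measurable lborel2" "R i \<in> borel_measurable lborel2"
      using F R by (simp_all add: nn_supported_in_def)
    then show "nn_sqnorm (R i) = nn_sqnorm (F i)"
      unfolding R_def by (intro nn_sqnorm_uminus)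
  qed
  have swap: "Jnn (F 1) (F 2) (F 3) = Jnn (F 2) (F 1) (F 3)"
    using meas by (intro Jnn_swap) auto
  have reflect: "Jnn (F 1) (F 2) (F 3) = Jnn (F 1) (R 3) (R 2)"
    and reflect': "Jnn (F 2) (F 1) (F 3) = Jnn (F 2) (R 3) (R 1)"
    unfolding R_def using meas by (intro Jnn_reflect; simp)+
  have swap_reflect: "Jnn (F 1) (R 3) (R 2) = Jnn (R 3) (F 1) (R 2)"
    and swap_reflect': "Jnn (F 2) (R 3) (R 1) = Jnn (R 3) (F 2) (R 1)"
    using meas by (intro Jnn_swap; simp)+
  from perm consider "(a, b, c) = (1, 2, 3)" | "(a, b, c) = (2, 1, 3)" | "(a, b, c) = (1, 3, 2)"
    | "(a, b, c) = (3, 1, 2)" | "(a, b, c) = (2, 3, 1)" | "(a, b, c) = (3, 2, 1)"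
    by blast
  then show ?thesis
  proof cases
    case 1
    then show ?thesis
      using that[of "F 1" "F 2" "F 3"] F by simp
  next
    case 2
    then show ?thesis
      using that[of "F 2" "F 1" "F 3"] F swap by (simp add: mult_ac)
  next
    case 3
    then show ?thesis
      using that[of "F 1" "R 3" "R 2"] F R norm reflect by (simp add: mult_ac)
  next
    case 4
    then show ?thesis
      using that[of "R 3" "F 1" "R 2"] F R norm reflect swap_reflect by (simp add: mult_ac)
  next
    case 5
    then show ?thesis
      using that[of "F 2" "R 3" "R 1"] F R norm swap reflect' by (simp add: mult_ac)
  next
    case 6
    then show ?thesis
      using that[of "R 3" "F 2" "R 1"] F R norm swap reflect' swap_reflect' by (simp add: mult_ac)
  qed
qed

lemma Jnn_sq_le_fibre_bound_perm:
  fixes F :: "nat \<Rightarrow> real \<times> real \<Rightarrow> ennreal"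
  assumes "\<And>i. i \<in> {1, 2, 3} \<Longrightarrow> nn_supported_in (F i) (S i)"
    and "\<And>i. S i \<in> sets lborel2" "\<And>i r. - r \<in> S i \<longleftrightarrow> r \<in> S i" "(a, b, c) \<in> perms3"
    and fibre_bound: "\<And>r. r \<in> S c \<Longrightarrow> emeasure lborel2 (fibre (S a) (S b) r) \<le> M"
  shows "(Jnn (F 1) (F 2) (F 3))\<^sup>2 \<le> M * (nn_sqnorm (F 1) * nn_sqnorm (F 2) * nn_sqnorm (F 3))"
proof -
  obtain G1 G2 G3 where G: "Jnn (F 1) (F 2) (F 3) = Jnn G1 G2 G3"
    "nn_sqnorm G1 * nn_sqnorm G2 * nn_sqnorm G3 = nn_sqnorm (F 1) * nn_sqnorm (F 2) * nn_sqnorm (F 3)"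
    "nn_supported_in G1 (S a)" "nn_supported_in G2 (S b)" "nn_supported_in G3 (S c)"
    using Jnn_permute[of F S, OF assms(1,3,4)] by blast
  have "(Jnn G1 G2 G3)\<^sup>2 \<le> M * (nn_sqnorm G1 * nn_sqnorm G2 * nn_sqnorm G3)"
    using G(3-5) assms(2) fibre_bound
    by (intro Jnn_sq_le_fibre_bound[of G1 G2 G3 "S a" "S b" "S c"]) (auto simp: nn_supported_in_def)
  with G(1,2) show ?thesis
    by simp
qed

section \<open>The dyadic estimates\<close>

lemma L2_measurable: "L2 f \<Longrightarrow> f \<in> borel_measurable lborel2"
  by (simp add: L2_def lborel_prod)

lemma L2norm_nonneg: "0 \<le> L2norm f"
  by (simp add: L2norm_def)

lemma nn_sqnorm_norm_L2:
  assumes "L2 f"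
  shows "nn_sqnorm (\<lambda>r. ennreal (norm (f r))) = ennreal ((L2norm f)\<^sup>2)"
proof -
  have "integrable lborel (\<lambda>x. (norm (f x))\<^sup>2)"
    using assms by (simp add: L2_def)
  then have "(\<integral>\<^sup>+x. ennreal ((norm (f x))\<^sup>2) \<partial>lborel) = ennreal (\<integral>x. (norm (f x))\<^sup>2 \<partial>lborel)"
    by (intro nn_integral_eq_integral) auto
  then show ?thesis
    unfolding nn_sqnorm_def L2norm_def lborel_prod by (simp add: ennreal_power integral_nonneg_AE)
qed

lemma norm_J_le_of_Jnn_le:
  fixes f1 f2 f3 :: "real \<times> real \<Rightarrow> complex"
  assumes [measurable]: "f1 \<in> borel_measurable lborel2" "f2 \<in> borel_measurable lborel2"
    "f3 \<in> borel_measurable lborel2"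
    and Jnn_le: "Jnn (\<lambda>r. ennreal (norm (f1 r))) (\<lambda>r. ennreal (norm (f2 r))) (\<lambda>r. ennreal (norm (f3 r))) \<le> ennreal B"
    and "0 \<le> B"
  shows "norm (J f1 f2 f3) \<le> B"
proof -
  define g where "g x = f1 (fst x) * f2 (snd x) * f3 (Omega_add (fst x) (snd x))"
    for x :: "(real \<times> real) \<times> (real \<times> real)"
  have [measurable]: "g \<in> borel_measurable (lborel2 \<Otimes>\<^sub>M lborel2)"
    unfolding g_def by measurable
  have J: "J f1 f2 f3 = integral\<^sup>L (lborel2 \<Otimes>\<^sub>M lborel2) g"
    unfolding J_def lborel_prod
    by (rule Bochner_Integration.integral_cong) (auto simp: g_def Omega_add_def split: prod.splits)
  have "(\<integral>\<^sup>+x. ennreal (norm (g x)) \<partial>(lborel2 \<Otimes>\<^sub>M lborel2))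
      = (\<integral>\<^sup>+p. \<integral>\<^sup>+q. ennreal (norm (g (p, q))) \<partial>lborel2 \<partial>lborel2)"
    by (rule sigma_finite_measure.nn_integral_fst[OF sigma_finite_lborel2, symmetric]) measurable
  also have "\<dots> = Jnn (\<lambda>r. ennreal (norm (f1 r))) (\<lambda>r. ennreal (norm (f2 r))) (\<lambda>r. ennreal (norm (f3 r)))"
    unfolding Jnn_def g_def by (simp add: norm_mult ennreal_mult)
  finally have nn: "(\<integral>\<^sup>+x. ennreal (norm (g x)) \<partial>(lborel2 \<Otimes>\<^sub>M lborel2)) \<le> ennreal B"
    using Jnn_le by simp
  show ?thesis
  proof (cases "integrable (lborel2 \<Otimes>\<^sub>M lborel2) g")
    case True
    have "norm (J f1 f2 f3) \<le> (\<integral>x. norm (g x) \<partial>(lborel2 \<Otimes>\<^sub>M lborel2))"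
      unfolding J by (rule integral_norm_bound)
    also have "\<dots> \<le> B"
      using nn True \<open>0 \<le> B\<close> by (simp add: nn_integral_eq_integral integral_nonneg_AE)
    finally show ?thesis .
  next
    case False
    then show ?thesis
      unfolding J using \<open>0 \<le> B\<close> by (simp add: not_integrable_integral_eq)
  qed
qed

lemma ennreal_le_of_power2_le:
  fixes I :: ennreal
  assumes "I\<^sup>2 \<le> ennreal (x\<^sup>2)" "0 \<le> x"
  shows "I \<le> ennreal x"
proof (cases I)
  case (real i)
  then have "i\<^sup>2 \<le> x\<^sup>2"
    using assms by (simp add: ennreal_power)
  then have "i \<le> x"
    using assms(2) by (rule power2_le_imp_le)
  then show ?thesis
    using real by simp
next
  case top
  then show ?thesis
    using assms(1) by (simp add: top_unique)
qed

lemma norm_J_le_sqrt_fibre_bound: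
  fixes f :: "nat \<Rightarrow> real \<times> real \<Rightarrow> complex" and S :: "nat \<Rightarrow> (real \<times> real) set"
  assumes L2: "\<And>i. i \<in> {1, 2, 3} \<Longrightarrow> L2 (f i)"
    and supp: "\<And>i x. i \<in> {1, 2, 3} \<Longrightarrow> x \<notin> S i \<Longrightarrow> f i x = 0"
    and "\<And>i. S i \<in> sets lborel2" "\<And>i r. - r \<in> S i \<longleftrightarrow> r \<in> S i" "(a, b, c) \<in> perms3"
    and "0 \<le> M" "\<And>r. r \<in> S c \<Longrightarrow> emeasure lborel2 (fibre (S a) (S b) r) \<le> ennreal M"
  shows "norm (J (f 1) (f 2) (f 3)) \<le> sqrt M * (\<Prod>i\<in>{1, 2, 3}. L2norm (f i))"
proof -
  define F where "F i = (\<lambda>r. ennreal (norm (f i r)))" for i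
  define N where "N = (\<Prod>i\<in>{1, 2, 3}. L2norm (f i))"
  have meas: "f i \<in> borel_measurable lborel2" if "i \<in> {1, 2, 3}" for i
    using L2[OF that] by (rule L2_measurable)
  have supported: "nn_supported_in (F i) (S i)" if i: "i \<in> {1, 2, 3}" for i
  proof -
    have [measurable]: "f i \<in> borel_measurable lborel2"
      using meas[OF i] .
    have "F i \<in> borel_measurable lborel2"
      unfolding F_def by measurable
    with supp[OF i] show ?thesis
      by (simp add: nn_supported_in_def F_def)
  qed
  have "(Jnn (F 1) (F 2) (F 3))\<^sup>2 \<le> ennreal M * (nn_sqnorm (F 1) * nn_sqnorm (F 2) * nn_sqnorm (F 3))"
    using supported assms(3-7) by (intro Jnn_sq_le_fibre_bound_perm[of F S a b c]) auto
  also have "\<dots> = ennreal ((sqrt M * N)\<^sup>2)"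
    using L2 \<open>0 \<le> M\<close>
    by (simp add: F_def N_def nn_sqnorm_norm_L2 L2norm_nonneg power_mult_distrib ennreal_mult[symmetric])
  finally have "Jnn (F 1) (F 2) (F 3) \<le> ennreal (sqrt M * N)"
    by (rule ennreal_le_of_power2_le) (simp add: N_def L2norm_nonneg \<open>0 \<le> M\<close>)
  then show ?thesis
    unfolding N_def F_def using meas \<open>0 \<le> M\<close>
    by (intro norm_J_le_of_Jnn_le) (simp_all add: L2norm_nonneg)
qed

lemma norm_J_le_sqrt_dyadic_fibre_bound:
  fixes k :: "nat \<Rightarrow> int" and j :: "nat \<Rightarrow> nat" and f :: "nat \<Rightarrow> real \<times> real \<Rightarrow> complex"
  defines "P \<equiv> \<lambda>i. 2 powr real_of_int (k i)" and "Q \<equiv> \<lambda>i. 2 powr real (j i)"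
  assumes H: "\<forall>i\<in>{1, 2, 3}. L2 (f i) \<and> (\<forall>x. x \<notin> Idy (k i) \<times> Itil (j i) \<longrightarrow> f i x = 0)"
    and "(a, b, c) \<in> perms3" "0 \<le> M"
    and "\<And>r. r \<in> dyadic_box (P c) (Q c) \<Longrightarrow>
      emeasure lborel2 (fibre (dyadic_box (P a) (Q a)) (dyadic_box (P b) (Q b)) r) \<le> ennreal M"
  shows "norm (J (f 1) (f 2) (f 3)) \<le> sqrt M * (\<Prod>i\<in>{1, 2, 3}. L2norm (f i))"
proof (rule norm_J_le_sqrt_fibre_bound[where S = "\<lambda>i. dyadic_box (P i) (Q i)"])
  fix i x
  assume i: "i \<in> {1, 2, 3}" and "x \<notin> dyadic_box (P i) (Q i)"
  then have "x \<notin> Idy (k i) \<times> Itil (j i)"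
    using Idy_times_Itil_subset[of "k i" "j i"] by (auto simp: P_def Q_def)
  then show "f i x = 0"
    using H i by blast
next
  show "\<And>i. i \<in> {1, 2, 3} \<Longrightarrow> L2 (f i)"
    using H by blast
next
  show "dyadic_box (P i) (Q i) \<in> sets lborel2" for i
    by measurable
qed (use assms(4-6) in simp_all)

lemma min_two_powr: "min ((2::real) powr x) (2 powr y) = 2 powr min x y"
  by (simp add: min_def)

lemma max_two_powr: "max ((2::real) powr x) (2 powr y) = 2 powr max x y"
  by (simp add: max_def)

lemma sqrt_two_powr: "sqrt ((2::real) powr x) = 2 powr (x / 2)"
  by (simp add: powr_half_sqrt_powr)

lemma separated_two_powr:
  fixes k :: "nat \<Rightarrow> int"
  assumes "(a, b, c) \<in> perms3" "min (k 1) (min (k 2) (k 3)) + 5 \<le> max (k 1) (max (k 2) (k 3))"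
  shows "separated (2 powr real_of_int (k a)) (2 powr real_of_int (k b)) (2 powr real_of_int (k c))"
proof -
  define m where "m = min (k a) (min (k b) (k c))"
  define M where "M = max (k a) (max (k b) (k c))"
  have "m + 5 \<le> M"
    using assms unfolding m_def M_def by (simp only: perms3_min_max)
  have "32 * (2::real) powr real_of_int m = 2 powr (real_of_int m + 5)"
    by (simp add: powr_add)
  also have "\<dots> \<le> 2 powr real_of_int M"
    using \<open>m + 5 \<le> M\<close> by simp
  finally show ?thesis
    by (simp add: separated_def min_two_powr max_two_powr m_def M_def)
qed

lemma norm_J_le_min_bound:
  fixes k :: "nat \<Rightarrow> int" and j :: "nat \<Rightarrow> nat" and f :: "nat \<Rightarrow> real \<times> real \<Rightarrow> complex"
  assumes H: "\<forall>i\<in>{1, 2, 3}. L2 (f i) \<and> (\<forall>x. x \<notin> Idy (k i) \<times> Itil (j i) \<longrightarrow> f i x = 0)"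
  shows "norm (J (f 1) (f 2) (f 3)) \<le> 4 * 2 powr (real_of_int (min (k 1) (min (k 2) (k 3))) / 2)
    * 2 powr (real (min (j 1) (min (j 2) (j 3))) / 2) * (\<Prod>i\<in>{1, 2, 3}. L2norm (f i))"
proof -
  obtain a b c where abc: "(a, b, c) \<in> perms3" "min (k a) (k b) = min (k 1) (min (k 2) (k 3))"
    "min (j a) (j b) = min (j 1) (min (j 2) (j 3))"
    by (rule perms3_min_pair[of k j])
  define km where "km = real_of_int (min (k 1) (min (k 2) (k 3)))"
  define jm where "jm = real (min (j 1) (min (j 2) (j 3)))"
  have "norm (J (f 1) (f 2) (f 3)) \<le> sqrt (16 * 2 powr km * 2 powr jm) * (\<Prod>i\<in>{1, 2, 3}. L2norm (f i))"
  proof (rule norm_J_le_sqrt_dyadic_fibre_bound[OF H abc(1)])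
    fix r
    have "min (2 powr real_of_int (k a)) (2 powr real_of_int (k b)) = (2::real) powr km"
      "min (2 powr real (j a)) (2 powr real (j b)) = (2::real) powr jm"
      using abc(2,3) by (simp_all add: min_two_powr km_def jm_def flip: of_int_min of_nat_min)
    then show "emeasure lborel2 (fibre (dyadic_box (2 powr real_of_int (k a)) (2 powr real (j a)))
        (dyadic_box (2 powr real_of_int (k b)) (2 powr real (j b))) r) \<le> ennreal (16 * 2 powr km * 2 powr jm)"
      using emeasure_fibre_le_min[of "2 powr real_of_int (k a)" "2 powr real_of_int (k b)"
        "2 powr real (j a)" "2 powr real (j b)" r] by simp
  qed simp
  also have "sqrt (16 * 2 powr km * 2 powr jm) = 4 * 2 powr (km / 2) * 2 powr (jm / 2)"
    by (simp add: real_sqrt_mult sqrt_two_powr)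
  finally show ?thesis
    by (simp add: km_def jm_def)
qed

lemma norm_J_le_separated_bound:
  fixes k :: "nat \<Rightarrow> int" and j :: "nat \<Rightarrow> nat" and f :: "nat \<Rightarrow> real \<times> real \<Rightarrow> complex"
  assumes H: "\<forall>i\<in>{1, 2, 3}. L2 (f i) \<and> (\<forall>x. x \<notin> Idy (k i) \<times> Itil (j i) \<longrightarrow> f i x = 0)"
    and sep: "min (k 1) (min (k 2) (k 3)) + 5 \<le> max (k 1) (max (k 2) (k 3))" and i: "i \<in> {1, 2, 3}"
  shows "norm (J (f 1) (f 2) (f 3)) \<le> 17 * 2 powr (real (j 1 + j 2 + j 3) / 2)
    * 2 powr (- (real (j i) + real_of_int (k i)) / 2) * (\<Prod>l\<in>{1, 2, 3}. L2norm (f l))"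
proof -
  have "\<exists>a b. (a, b, i) \<in> perms3"
    using i by auto
  then obtain a b where abi: "(a, b, i) \<in> perms3"
    by blast
  define e where "e = real (j a) + real (j b) - real_of_int (k i)"
  have N: "0 \<le> (\<Prod>l\<in>{1, 2, 3}. L2norm (f l))"
    by (simp add: L2norm_nonneg)
  have "e / 2 = real (j 1 + j 2 + j 3) / 2 + - (real (j i) + real_of_int (k i)) / 2"
    using abi by (auto simp: e_def field_simps)
  then have exponent:
    "2 powr (e / 2) = 2 powr (real (j 1 + j 2 + j 3) / 2) * 2 powr (- (real (j i) + real_of_int (k i)) / 2)"
    by (simp only: powr_add)
  have "norm (J (f 1) (f 2) (f 3)) \<le> sqrt (288 * 2 powr e) * (\<Prod>l\<in>{1, 2, 3}. L2norm (f l))"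
  proof (rule norm_J_le_sqrt_dyadic_fibre_bound[OF H abi])
    fix r
    assume "r \<in> dyadic_box (2 powr real_of_int (k i)) (2 powr real (j i))"
    from emeasure_fibre_le_separated[of _ "2 powr real (j a)" "2 powr real (j b)",
        OF _ _ _ this separated_two_powr[OF abi sep]]
    show "emeasure lborel2 (fibre (dyadic_box (2 powr real_of_int (k a)) (2 powr real (j a)))
        (dyadic_box (2 powr real_of_int (k b)) (2 powr real (j b))) r) \<le> ennreal (288 * 2 powr e)"
      by (simp add: e_def powr_add powr_diff mult.assoc)
  qed simp
  also have "\<dots> \<le> 17 * 2 powr (e / 2) * (\<Prod>l\<in>{1, 2, 3}. L2norm (f l))"
  proof (rule mult_right_mono[OF _ N])
    have "sqrt 288 \<le> (17::real)"
      by (rule real_le_lsqrt) auto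
    then show "sqrt (288 * 2 powr e) \<le> 17 * 2 powr (e / 2)"
      by (simp add: real_sqrt_mult sqrt_two_powr)
  qed
  finally show ?thesis
    by (simp add: exponent mult.assoc)
qed

lemma norm_J_le_median_bound:
  fixes k :: "nat \<Rightarrow> int" and j :: "nat \<Rightarrow> nat" and f :: "nat \<Rightarrow> real \<times> real \<Rightarrow> complex"
  assumes H: "\<forall>i\<in>{1, 2, 3}. L2 (f i) \<and> (\<forall>x. x \<notin> Idy (k i) \<times> Itil (j i) \<longrightarrow> f i x = 0)"
  shows "norm (J (f 1) (f 2) (f 3)) \<le> 8 * 2 powr (real (min (j 1) (min (j 2) (j 3))) / 2
    + med (real (j 1)) (real (j 2)) (real (j 3)) / 4) * (\<Prod>i\<in>{1, 2, 3}. L2norm (f i))"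
proof -
  obtain a b c where abc: "(a, b, c) \<in> perms3" "j a \<le> j b" "j b \<le> j c"
    by (rule perms3_sorted[of j])
  let ?P = "\<lambda>i. 2 powr real_of_int (k i) :: real" and ?Q = "\<lambda>i. 2 powr real (j i) :: real"
  let ?M = "56 * ?Q a * sqrt (?Q b)"
  have "norm (J (f 1) (f 2) (f 3)) \<le> sqrt ?M * (\<Prod>i\<in>{1, 2, 3}. L2norm (f i))"
  proof (cases "?P c \<le> sqrt (?Q b)")
    case True
    \<comment> \<open>Then the crude bound for the pair \<open>(a, c)\<close> is already good enough.\<close>
    have "(a, c, b) \<in> perms3"
      using abc(1) by auto
    then show ?thesis
    proof (rule norm_J_le_sqrt_dyadic_fibre_bound[OF H])
      fix r
      have "min (?P a) (?P c) \<le> sqrt (?Q b)"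
        using True by (rule min.coboundedI2)
      moreover have "min (?Q a) (?Q c) = ?Q a"
        using abc(2,3) by (simp add: min_def)
      ultimately have "16 * min (?P a) (?P c) * min (?Q a) (?Q c) \<le> 16 * sqrt (?Q b) * ?Q a"
        by simp
      also have "\<dots> \<le> ?M"
        by simp
      finally show "emeasure lborel2 (fibre (dyadic_box (?P a) (?Q a)) (dyadic_box (?P c) (?Q c)) r)
          \<le> ennreal ?M"
        using emeasure_fibre_le_min[of "?P a" "?P c" "?Q a" "?Q c" r] by (auto intro: order_trans ennreal_leI)
    qed simp
  next
    case False
    then show ?thesis
      by (intro norm_J_le_sqrt_dyadic_fibre_bound[OF H abc(1)] emeasure_fibre_le_sqrt_if_high_frequency) auto
  qed
  also have "\<dots> \<le> 8 * (2 powr (real (j a) / 2) * 2 powr (real (j b) / 4)) * (\<Prod>i\<in>{1, 2, 3}. L2norm (f i))"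
  proof (rule mult_right_mono)
    have "sqrt 56 \<le> (8::real)"
      by (rule real_le_lsqrt) auto
    then show "sqrt ?M \<le> 8 * (2 powr (real (j a) / 2) * 2 powr (real (j b) / 4))"
      by (simp add: real_sqrt_mult sqrt_two_powr)
  qed (simp add: L2norm_nonneg)
  also have "2 powr (real (j a) / 2) * 2 powr (real (j b) / 4)
      = (2::real) powr (real (min (j 1) (min (j 2) (j 3))) / 2 + med (real (j 1)) (real (j 2)) (real (j 3)) / 4)"
    using perms3_sorted_min_med[of a b c "\<lambda>i. real (j i)"] abc by (simp add: powr_add of_nat_min)
  finally show ?thesis
    by (simp add: mult.assoc)
qed

theorem lemma6p1:
  shows "\<exists>C::real. \<forall>(k :: nat \<Rightarrow> int) (j :: nat \<Rightarrow> nat) (f :: nat \<Rightarrow> real \<times> real \<Rightarrow> complex).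
    (\<forall>i\<in>{1,2,3}. L2 (f i) \<and> (\<forall>x. x \<notin> Idy (k i) \<times> Itil (j i) \<longrightarrow> f i x = 0)) \<longrightarrow>
    (norm (J (f 1) (f 2) (f 3)) \<le> C * 2 powr (real_of_int (min (k 1) (min (k 2) (k 3))) / 2)
        * 2 powr (real (min (j 1) (min (j 2) (j 3))) / 2) * (\<Prod>i\<in>{1,2,3}. L2norm (f i))) \<and>
    (max (k 1) (max (k 2) (k 3)) \<ge> min (k 1) (min (k 2) (k 3)) + 5 \<longrightarrow>
      (\<forall>i\<in>{1,2,3}. norm (J (f 1) (f 2) (f 3)) \<le>
         C * 2 powr (real (j 1 + j 2 + j 3) / 2) * 2 powr (- (real (j i) + real_of_int (k i)) / 2)
         * (\<Prod>l\<in>{1,2,3}. L2norm (f l)))) \<and>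
    (norm (J (f 1) (f 2) (f 3)) \<le>
       C * 2 powr (real (min (j 1) (min (j 2) (j 3))) / 2 + med (real (j 1)) (real (j 2)) (real (j 3)) / 4)
       * (\<Prod>i\<in>{1,2,3}. L2norm (f i)))"
proof (intro exI[of _ 17] allI impI conjI ballI)
  fix k :: "nat \<Rightarrow> int" and j :: "nat \<Rightarrow> nat" and f :: "nat \<Rightarrow> real \<times> real \<Rightarrow> complex"
  assume H: "\<forall>i\<in>{1, 2, 3}. L2 (f i) \<and> (\<forall>x. x \<notin> Idy (k i) \<times> Itil (j i) \<longrightarrow> f i x = 0)"
  let ?N = "\<Prod>i\<in>{1, 2, 3}. L2norm (f i)"
  have N: "0 \<le> ?N"
    by (simp add: L2norm_nonneg)
  show "norm (J (f 1) (f 2) (f 3)) \<le> 17 * 2 powr (real_of_int (min (k 1) (min (k 2) (k 3))) / 2)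
      * 2 powr (real (min (j 1) (min (j 2) (j 3))) / 2) * ?N"
    using norm_J_le_min_bound[OF H] by (rule order_trans) (intro mult_right_mono N; simp)
  show "norm (J (f 1) (f 2) (f 3)) \<le> 17 * 2 powr (real (j 1 + j 2 + j 3) / 2)
      * 2 powr (- (real (j i) + real_of_int (k i)) / 2) * ?N"
    if "min (k 1) (min (k 2) (k 3)) + 5 \<le> max (k 1) (max (k 2) (k 3))" and "i \<in> {1, 2, 3}" for i
    using norm_J_le_separated_bound[OF H that] .
  show "norm (J (f 1) (f 2) (f 3)) \<le> 17 * 2 powr (real (min (j 1) (min (j 2) (j 3))) / 2
      + med (real (j 1)) (real (j 2)) (real (j 3)) / 4) * ?N"
    using norm_J_le_median_bound[OF H] by (rule order_trans) (intro mult_right_mono N; simp)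
qed

end
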